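(* Let $\mathcal X,\mathcal U$ be finite nonempty sets, $f:\mathcal X\times\mathcal U\to\mathcal X$ and $\ell,g:\mathcal X\to\mathbb R$. Let $V_{\mathrm A}^*(x)=\max_{\pi\in\Pi}\min_{\tau\in\mathbb N}g(\xi_x^\pi(\tau))$ and $\tilde\ell(x)=\min\{\ell(x),V_{\mathrm A}^*(x)\}$. Then for all $x\in\mathcal X$, $$\max_{\pi\in\Pi}\max_{\tau\in\mathbb N}\min\Big\{\tilde\ell(\xi_x^\pi(\tau)),\min_{\kappa\le\tau}g(\xi_x^\pi(\kappa))\Big\}=\max_{\mathbf u\in\mathbb U}\max_{\tau\in\mathbb N}\min\Big\{\tilde\ell(\xi_x^{\mathbf u}(\tau)),\min_{\kappa\le\tau}g(\xi_x^{\mathbf u}(\kappa))\Big\}.$$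
   Context: $\mathbb N=\{0,1,\dots\}$; $\Pi$ is the set of maps $\mathcal X\to\mathcal U$; $\mathbb U$ is the set of sequences $\mathbb N\to\mathcal U$. For $\pi\in\Pi$: $\xi_x^\pi(0)=x$, $\xi_x^\pi(t+1)=f(\xi_x^\pi(t),\pi(\xi_x^\pi(t)))$. For $\mathbf u\in\mathbb U$: $\xi_x^{\mathbf u}(0)=x$, $\xi_x^{\mathbf u}(t+1)=f(\xi_x^{\mathbf u}(t),\mathbf u(t))$. *)

theory Defs
  imports Main Complex_Main
begin

primrec traj_pol :: "('x \<Rightarrow> 'u \<Rightarrow> 'x) \<Rightarrow> ('x \<Rightarrow> 'u) \<Rightarrow> 'x \<Rightarrow> nat \<Rightarrow> 'x" where
  "traj_pol f p x 0 = x"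
| "traj_pol f p x (Suc t) = f (traj_pol f p x t) (p (traj_pol f p x t))"

primrec traj_seq :: "('x \<Rightarrow> 'u \<Rightarrow> 'x) \<Rightarrow> (nat \<Rightarrow> 'u) \<Rightarrow> 'x \<Rightarrow> nat \<Rightarrow> 'x" where
  "traj_seq f u x 0 = x"
| "traj_seq f u x (Suc t) = f (traj_seq f u x t) (u t)"

text \<open>V_A^*(x) = max over policies of min over times of g along the trajectory.
  All maxima/minima are over finite value sets (values lie in the finite range of g).\<close>
definition VA :: "('x::finite \<Rightarrow> 'u::finite \<Rightarrow> 'x) \<Rightarrow> ('x \<Rightarrow> real) \<Rightarrow> 'x \<Rightarrow> real" where
  "VA f g x = Max ((\<lambda>p. Min ((\<lambda>\<tau>. g (traj_pol f p x \<tau>)) ` UNIV)) ` (UNIV :: ('x \<Rightarrow> 'u) set))"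

definition ltilde :: "('x::finite \<Rightarrow> 'u::finite \<Rightarrow> 'x) \<Rightarrow> ('x \<Rightarrow> real) \<Rightarrow> ('x \<Rightarrow> real) \<Rightarrow> 'x \<Rightarrow> real" where
  "ltilde f l g x = min (l x) (VA f g x)"

end

theory Submission
  imports Defs
begin

text \<open>Every closed-loop trajectory is an open-loop one, so the policy maximum is at most the
  input-sequence maximum. Conversely, an open-loop trajectory that revisits a state can skip the
  loop in between; after removing all loops it visits pairwise distinct states, so a state-feedback
  policy reproduces it. Loop removal only shrinks the set of visited states and keeps the end
  point, which can only increase the reach-avoid payoff. Nothing about \<open>ltilde\<close> beyond being a
  function of the state is used.\<close>

definition reach_avoid_stage :: "('x \<Rightarrow> 'a::linorder) \<Rightarrow> ('x \<Rightarrow> 'a) \<Rightarrow> (nat \<Rightarrow> 'x) \<Rightarrow> nat \<Rightarrow> 'a" where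
  "reach_avoid_stage h g \<xi> \<tau> = min (h (\<xi> \<tau>)) (Min ((\<lambda>\<kappa>. g (\<xi> \<kappa>)) ` {..\<tau>}))"

definition reach_avoid_payoff :: "('x \<Rightarrow> 'a::linorder) \<Rightarrow> ('x \<Rightarrow> 'a) \<Rightarrow> (nat \<Rightarrow> 'x) \<Rightarrow> 'a" where
  "reach_avoid_payoff h g \<xi> = Max (range (reach_avoid_stage h g \<xi>))"

lemma traj_seq_traj_pol: "traj_seq f (\<lambda>t. p (traj_pol f p x t)) x = traj_pol f p x"
proof
  show "traj_seq f (\<lambda>t. p (traj_pol f p x t)) x t = traj_pol f p x t" for t
    by (induction t) simp_all
qed

lemma traj_seq_skip_loop:
  assumes "traj_seq f u x i = traj_seq f u x (i + d)"
  shows "traj_seq f (\<lambda>k. if k < i then u k else u (k + d)) x k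
           = (if k \<le> i then traj_seq f u x k else traj_seq f u x (k + d))"
proof (induction k)
  case 0
  show ?case by simp
next
  case (Suc k)
  consider "k < i" | "k = i" | "k > i" by linarith
  then show ?case
    using Suc assms by cases simp_all
qed

lemma traj_seq_skip_loop_within:
  assumes loop: "traj_seq f u x i = traj_seq f u x (i + d)" and "i + d \<le> \<tau>"
  defines "u' \<equiv> (\<lambda>k. if k < i then u k else u (k + d))"
  shows "traj_seq f u' x (\<tau> - d) = traj_seq f u x \<tau>"
    and "traj_seq f u' x ` {..\<tau> - d} \<subseteq> traj_seq f u x ` {..\<tau>}"
proof -
  have skip: "traj_seq f u' x k = (if k \<le> i then traj_seq f u x k else traj_seq f u x (k + d))"
    for k unfolding u'_def using loop by (rule traj_seq_skip_loop)
  show "traj_seq f u' x (\<tau> - d) = traj_seq f u x \<tau>"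
  proof (cases "\<tau> - d \<le> i")
    case True
    then have "\<tau> = i + d" using \<open>i + d \<le> \<tau>\<close> by linarith
    then show ?thesis using skip[of "\<tau> - d"] loop by simp
  next
    case False
    then show ?thesis using skip[of "\<tau> - d"] \<open>i + d \<le> \<tau>\<close> by simp
  qed
  show "traj_seq f u' x ` {..\<tau> - d} \<subseteq> traj_seq f u x ` {..\<tau>}"
  proof
    fix y assume "y \<in> traj_seq f u' x ` {..\<tau> - d}"
    then obtain k where "k \<le> \<tau> - d" "y = traj_seq f u' x k" by auto
    then show "y \<in> traj_seq f u x ` {..\<tau>}"
      using skip[of k] \<open>i + d \<le> \<tau>\<close> by (auto split: if_splits)
  qed
qed

lemma traj_seq_loop_free:
  "\<exists>v \<sigma>. inj_on (traj_seq f v x) {..\<sigma>} \<and> traj_seq f v x \<sigma> = traj_seq f u x \<tau>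
          \<and> traj_seq f v x ` {..\<sigma>} \<subseteq> traj_seq f u x ` {..\<tau>}"
proof (induction \<tau> arbitrary: u rule: less_induct)
  case (less \<tau>)
  show ?case
  proof (cases "inj_on (traj_seq f u x) {..\<tau>}")
    case True
    then show ?thesis by blast
  next
    case False
    then obtain i j where "i < j" "j \<le> \<tau>" and "traj_seq f u x i = traj_seq f u x j"
      unfolding inj_on_def by (metis atMost_iff linorder_neqE_nat)
    moreover define d where "d = j - i"
    ultimately have "d > 0" "i + d \<le> \<tau>" and loop: "traj_seq f u x i = traj_seq f u x (i + d)"
      by simp_all
    define u' where "u' = (\<lambda>k. if k < i then u k else u (k + d))"
    have end_eq: "traj_seq f u' x (\<tau> - d) = traj_seq f u x \<tau>"
      and visited: "traj_seq f u' x ` {..\<tau> - d} \<subseteq> traj_seq f u x ` {..\<tau>}"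
      unfolding u'_def using loop \<open>i + d \<le> \<tau>\<close> by (rule traj_seq_skip_loop_within)+
    obtain v \<sigma> where "inj_on (traj_seq f v x) {..\<sigma>}" "traj_seq f v x \<sigma> = traj_seq f u' x (\<tau> - d)"
      and "traj_seq f v x ` {..\<sigma>} \<subseteq> traj_seq f u' x ` {..\<tau> - d}"
      using less[of "\<tau> - d" u'] \<open>d > 0\<close> \<open>i + d \<le> \<tau>\<close> by auto
    moreover from this(3) visited have "traj_seq f v x ` {..\<sigma>} \<subseteq> traj_seq f u x ` {..\<tau>}"
      by (rule subset_trans)
    ultimately show ?thesis
      using end_eq by auto
  qed
qed

lemma traj_pol_eq_traj_seq_if_inj:
  assumes "inj_on (traj_seq f u x) {..\<tau>}" "k \<le> \<tau>"
  shows "traj_pol f (\<lambda>y. u (inv_into {..\<tau>} (traj_seq f u x) y)) x k = traj_seq f u x k"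
  using assms(2)
proof (induction k)
  case 0
  show ?case by simp
next
  case (Suc k)
  then show ?case
    using inv_into_f_f[OF assms(1), of k] by simp
qed

lemma traj_seq_reached_by_pol:
  "\<exists>p \<sigma>. traj_pol f p x \<sigma> = traj_seq f u x \<tau> \<and> traj_pol f p x ` {..\<sigma>} \<subseteq> traj_seq f u x ` {..\<tau>}"
proof -
  obtain v \<sigma> where inj: "inj_on (traj_seq f v x) {..\<sigma>}"
    and end_eq: "traj_seq f v x \<sigma> = traj_seq f u x \<tau>"
    and visited: "traj_seq f v x ` {..\<sigma>} \<subseteq> traj_seq f u x ` {..\<tau>}"
    using traj_seq_loop_free[of f x u \<tau>] by (elim exE conjE)
  define p where "p = (\<lambda>y. v (inv_into {..\<sigma>} (traj_seq f v x) y))"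
  have agree: "traj_pol f p x k = traj_seq f v x k" if "k \<le> \<sigma>" for k
    unfolding p_def using inj that by (rule traj_pol_eq_traj_seq_if_inj)
  then have "traj_pol f p x ` {..\<sigma>} = traj_seq f v x ` {..\<sigma>}"
    by (intro image_cong) simp_all
  then show ?thesis
    using agree[of \<sigma>] end_eq visited by (intro exI[of _ p] exI[of _ \<sigma>]) simp
qed

lemma reach_avoid_stage_in: "reach_avoid_stage h g \<xi> \<tau> \<in> range h \<union> range g"
proof -
  have "Min ((\<lambda>\<kappa>. g (\<xi> \<kappa>)) ` {..\<tau>}) \<in> (\<lambda>\<kappa>. g (\<xi> \<kappa>)) ` {..\<tau>}"
    by (rule Min_in) simp_all
  then have "Min ((\<lambda>\<kappa>. g (\<xi> \<kappa>)) ` {..\<tau>}) \<in> range g"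
    by blast
  then show ?thesis
    unfolding reach_avoid_stage_def min_def by simp
qed

lemma finite_range_reach_avoid_stage:
  fixes \<xi> :: "nat \<Rightarrow> 'x::finite"
  shows "finite (range (reach_avoid_stage h g \<xi>))"
proof (rule finite_subset)
  show "range (reach_avoid_stage h g \<xi>) \<subseteq> range h \<union> range g"
    by (rule image_subsetI) (rule reach_avoid_stage_in)
qed simp

lemma reach_avoid_stage_le_payoff:
  fixes \<xi> :: "nat \<Rightarrow> 'x::finite"
  shows "reach_avoid_stage h g \<xi> \<tau> \<le> reach_avoid_payoff h g \<xi>"
  unfolding reach_avoid_payoff_def
  using finite_range_reach_avoid_stage by (rule Max_ge) (rule rangeI)

lemma reach_avoid_payoff_in:
  fixes \<xi> :: "nat \<Rightarrow> 'x::finite"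
  shows "reach_avoid_payoff h g \<xi> \<in> range h \<union> range g"
proof -
  have "reach_avoid_payoff h g \<xi> \<in> range (reach_avoid_stage h g \<xi>)"
    unfolding reach_avoid_payoff_def
    using finite_range_reach_avoid_stage by (rule Max_in) simp
  then obtain \<tau> where "reach_avoid_payoff h g \<xi> = reach_avoid_stage h g \<xi> \<tau>"
    by blast
  then show ?thesis
    using reach_avoid_stage_in[of h g \<xi> \<tau>] by simp
qed

lemma finite_range_reach_avoid_payoff:
  fixes \<xi> :: "'i \<Rightarrow> nat \<Rightarrow> 'x::finite"
  shows "finite (range (\<lambda>i. reach_avoid_payoff h g (\<xi> i)))"
proof (rule finite_subset)
  show "range (\<lambda>i. reach_avoid_payoff h g (\<xi> i)) \<subseteq> range h \<union> range g"
    by (rule image_subsetI) (rule reach_avoid_payoff_in)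
qed simp

lemma reach_avoid_stage_mono:
  assumes "\<xi>' \<sigma> = \<xi> \<tau>" "\<xi>' ` {..\<sigma>} \<subseteq> \<xi> ` {..\<tau>}"
  shows "reach_avoid_stage h g \<xi> \<tau> \<le> reach_avoid_stage h g \<xi>' \<sigma>"
proof -
  have "(\<lambda>\<kappa>. g (\<xi>' \<kappa>)) ` {..\<sigma>} \<subseteq> (\<lambda>\<kappa>. g (\<xi> \<kappa>)) ` {..\<tau>}"
    using image_mono[OF assms(2), of g] by (simp add: image_image)
  then have "Min ((\<lambda>\<kappa>. g (\<xi> \<kappa>)) ` {..\<tau>}) \<le> Min ((\<lambda>\<kappa>. g (\<xi>' \<kappa>)) ` {..\<sigma>})"
    by (rule Min_antimono) simp_all
  then show ?thesis
    unfolding reach_avoid_stage_def assms(1) by (rule min.mono[OF order_refl])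
qed

lemma max_reach_avoid_payoff_pol_eq_seq:
  fixes f :: "'x::finite \<Rightarrow> 'u::finite \<Rightarrow> 'x"
  shows "Max (range (\<lambda>p. reach_avoid_payoff h g (traj_pol f p x)))
       = Max (range (\<lambda>u. reach_avoid_payoff h g (traj_seq f u x)))"
    (is "Max ?Pol = Max ?Seq")
proof (rule antisym)
  have "?Pol \<subseteq> ?Seq"
  proof (rule image_subsetI)
    fix p :: "'x \<Rightarrow> 'u"
    have "reach_avoid_payoff h g (traj_pol f p x)
          = reach_avoid_payoff h g (traj_seq f (\<lambda>t. p (traj_pol f p x t)) x)"
      by (simp only: traj_seq_traj_pol)
    then show "reach_avoid_payoff h g (traj_pol f p x) \<in> ?Seq"
      by blast
  qed
  then show "Max ?Pol \<le> Max ?Seq"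
    by (rule Max_mono) (simp_all add: finite_range_reach_avoid_payoff)
next
  have "reach_avoid_stage h g (traj_seq f u x) \<tau> \<le> Max ?Pol" for u \<tau>
  proof -
    obtain p \<sigma> where "traj_pol f p x \<sigma> = traj_seq f u x \<tau>"
      "traj_pol f p x ` {..\<sigma>} \<subseteq> traj_seq f u x ` {..\<tau>}"
      using traj_seq_reached_by_pol[of f x u \<tau>] by (elim exE conjE)
    then have "reach_avoid_stage h g (traj_seq f u x) \<tau> \<le> reach_avoid_stage h g (traj_pol f p x) \<sigma>"
      by (rule reach_avoid_stage_mono)
    also have "\<dots> \<le> reach_avoid_payoff h g (traj_pol f p x)"
      by (rule reach_avoid_stage_le_payoff)
    also have "\<dots> \<le> Max ?Pol"
      by (rule Max_ge[OF finite_range_reach_avoid_payoff]) (rule rangeI)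
    finally show ?thesis .
  qed
  then have "reach_avoid_payoff h g (traj_seq f u x) \<le> Max ?Pol" for u
    unfolding reach_avoid_payoff_def by (intro Max.boundedI[OF finite_range_reach_avoid_stage]) auto
  then show "Max ?Seq \<le> Max ?Pol"
    by (intro Max.boundedI[OF finite_range_reach_avoid_payoff]) auto
qed

theorem mainTheorem6:
  fixes f :: "'x::finite \<Rightarrow> 'u::finite \<Rightarrow> 'x" and l g :: "'x \<Rightarrow> real" and x :: 'x
  shows "Max ((\<lambda>p. Max ((\<lambda>\<tau>. min (ltilde f l g (traj_pol f p x \<tau>))
                         (Min ((\<lambda>\<kappa>. g (traj_pol f p x \<kappa>)) ` {..\<tau>}))) ` UNIV))
              ` (UNIV :: ('x \<Rightarrow> 'u) set))
       = Max ((\<lambda>u. Max ((\<lambda>\<tau>. min (ltilde f l g (traj_seq f u x \<tau>))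
                         (Min ((\<lambda>\<kappa>. g (traj_seq f u x \<kappa>)) ` {..\<tau>}))) ` UNIV))
              ` (UNIV :: (nat \<Rightarrow> 'u) set))"
  using max_reach_avoid_payoff_pol_eq_seq[of "ltilde f l g" g f x]
  unfolding reach_avoid_payoff_def reach_avoid_stage_def .

end
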